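(* Let $X$ be a real reflexive Banach space and $f:X\to\mathbb{R}\cup\{+\infty\}$ a lower semicontinuous proper convex function, and let $f^{FY}(x,x^{\ast}):=f(x)+f^{\ast}(x^{\ast})$ on $X\times X^{\ast}$. Then for every $\epsilon\ge0$ and $x\in X$, $\partial_\epsilon f(x)=\breve{T}_{f^{FY}}(\epsilon,x)$, i.e. $\partial_\epsilon f(x)=\{x^{\ast}\in X^{\ast}:(x^{\ast},x)\in\partial_{2\epsilon}f^{FY}(x,x^{\ast})\}$.
   Context: $X^{\ast}$ is the dual of $X$ with pairing $\langle\cdot,\cdot\rangle$; $f^{\ast}(x^{\ast})=\sup_x\{\langle x,x^{\ast}\rangle-f(x)\}$. For $\epsilon\ge0$, $\partial_\epsilon f(x)=\{x^{\ast}: f(y)-f(x)\ge\langle y-x,x^{\ast}\rangle-\epsilon\ \forall y\in X\}$ if $f(x)<\infty$, and $\emptyset$ otherwise. The dual of $X\times X^{\ast}$ is identified with $X^{\ast}\times X$ via $\langle (x,x^{\ast}),(y^{\ast},y)\rangle=\langle x,y^{\ast}\rangle+\langle y,x^{\ast}\rangle$; for $g:X\times X^{\ast}\to\mathbb{R}\cup\{+\infty\}$ and $\eta\ge0$, $\partial_\eta g(z)$ is the set of $(y^{\ast},y)\in X^{\ast}\times X$ with $g(w,w^{\ast})\ge g(z)+\langle (w,w^{\ast})-z,(y^{\ast},y)\rangle-\eta$ for all $(w,w^{\ast})$ when $g(z)<\infty$, and $\emptyset$ otherwise. For such $g$, $\breve{T}_g(\epsilon,x):=\{x^{\ast}:(x^{\ast},x)\in\partial_{2\epsilon}g(x,x^{\ast})\}$.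 *)

theory Defs
  imports "HOL-Analysis.Analysis"
begin

(* The dual space X* of a real Banach space X is modelled as the space of bounded
   linear functionals (blinfun into real); the pairing is evaluation. *)

definition reflexive_space :: "'a::banach itself \<Rightarrow> bool" where
  "reflexive_space TYPE('a) \<longleftrightarrow>
     (\<forall>\<Phi> :: ('a \<Rightarrow>\<^sub>L real) \<Rightarrow>\<^sub>L real. \<exists>x::'a. \<forall>xs. blinfun_apply \<Phi> xs = blinfun_apply xs x)"

definition proper_fun :: "('a \<Rightarrow> ereal) \<Rightarrow> bool" where
  "proper_fun f \<longleftrightarrow> (\<forall>x. f x \<noteq> -\<infinity>) \<and> (\<exists>x. f x < \<infinity>)"

definition convex_fun :: "('a::real_vector \<Rightarrow> ereal) \<Rightarrow> bool" where
  "convex_fun f \<longleftrightarrow> (\<forall>x y u. 0 < u \<and> u < 1 \<longrightarrow>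
       f (u *\<^sub>R x + (1 - u) *\<^sub>R y) \<le> ereal u * f x + ereal (1 - u) * f y)"

definition lsc_fun :: "('a::topological_space \<Rightarrow> ereal) \<Rightarrow> bool" where
  "lsc_fun f \<longleftrightarrow> (\<forall>c::real. closed {x. f x \<le> ereal c})"

definition conjugate :: "('a::real_normed_vector \<Rightarrow> ereal) \<Rightarrow> ('a \<Rightarrow>\<^sub>L real) \<Rightarrow> ereal" where
  "conjugate f xs = (SUP x. ereal (blinfun_apply xs x) - f x)"

definition eps_subdiff :: "('a::real_normed_vector \<Rightarrow> ereal) \<Rightarrow> real \<Rightarrow> 'a \<Rightarrow> ('a \<Rightarrow>\<^sub>L real) set" where
  "eps_subdiff f \<epsilon> x = (if f x < \<infinity> then
      {xs. \<forall>y. f y - f x \<ge> ereal (blinfun_apply xs (y - x)) - ereal \<epsilon>} else {})"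

(* eps-subdifferential of g on X x X*, with the dual of X x X* identified with X* x X via
   pairing of (x,xs) with (ys,y) given by ys(x) + xs(y). *)
definition eps_subdiff_pair ::
  "('a::real_normed_vector \<times> ('a \<Rightarrow>\<^sub>L real) \<Rightarrow> ereal) \<Rightarrow> real \<Rightarrow> 'a \<times> ('a \<Rightarrow>\<^sub>L real)
     \<Rightarrow> (('a \<Rightarrow>\<^sub>L real) \<times> 'a) set" where
  "eps_subdiff_pair g \<eta> z = (if g z < \<infinity> then
      {(ys, y). \<forall>w ws. g (w, ws) \<ge> g z + ereal (blinfun_apply ys (w - fst z)
                  + blinfun_apply (ws - snd z) y) - ereal \<eta>} else {})"

definition T_breve ::
  "('a::real_normed_vector \<times> ('a \<Rightarrow>\<^sub>L real) \<Rightarrow> ereal) \<Rightarrow> real \<Rightarrow> 'a \<Rightarrow> ('a \<Rightarrow>\<^sub>L real) set" where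
  "T_breve g \<epsilon> x = {xs. (xs, x) \<in> eps_subdiff_pair g (2 * \<epsilon>) (x, xs)}"

definition fitzpatrick_FY ::
  "('a::real_normed_vector \<Rightarrow> ereal) \<Rightarrow> 'a \<times> ('a \<Rightarrow>\<^sub>L real) \<Rightarrow> ereal" where
  "fitzpatrick_FY f = (\<lambda>(x, xs). f x + conjugate f xs)"

end

theory Submission
  imports Defs
begin

text \<open>Both sets coincide with \<open>{x\<^sup>*. f x + f\<^sup>* x\<^sup>* \<le> \<langle>x, x\<^sup>*\<rangle> + \<epsilon>}\<close>. For \<open>T_breve\<close>, minimising
  the defining inequality separately over \<open>w\<close> and \<open>w\<^sup>*\<close> turns it into
  \<open>-f\<^sup>* x\<^sup>* - f\<^sup>*\<^sup>* x \<ge> f x + f\<^sup>* x\<^sup>* - 2\<langle>x, x\<^sup>*\<rangle> - 2\<epsilon>\<close>, and \<open>f\<^sup>*\<^sup>* x = f x\<close> for a lower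
  semicontinuous proper convex \<open>f\<close>. The latter needs continuous affine minorants of \<open>f\<close> nearly
  touching it at \<open>x\<close>, obtained by separating a small open box below the graph from the epigraph
  with the Hahn--Banach theorem.\<close>

section \<open>Hahn--Banach\<close>

definition sublinear :: "('a::real_vector \<Rightarrow> real) \<Rightarrow> bool" where
  "sublinear p \<longleftrightarrow> (\<forall>x y. p (x + y) \<le> p x + p y) \<and> (\<forall>x c. 0 < c \<longrightarrow> p (c *\<^sub>R x) = c * p x)"

lemma sublinear_add: "sublinear p \<Longrightarrow> p (x + y) \<le> p x + p y"
  unfolding sublinear_def by blast

lemma sublinear_scaleR: "sublinear p \<Longrightarrow> 0 < c \<Longrightarrow> p (c *\<^sub>R x) = c * p x"
  unfolding sublinear_def by blast

lemma sublinear_zero: "sublinear p \<Longrightarrow> p 0 = 0"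
  using sublinear_scaleR[of p 2 0] by simp

lemma sublinear_minus: "sublinear p \<Longrightarrow> - p x \<le> p (- x)"
  using sublinear_add[of p x "- x"] sublinear_zero[of p] by simp

text \<open>Partial linear functionals are encoded by their graphs, so that Zorn's lemma applies to
  set inclusion.\<close>

definition dominated_linear_graph :: "('a::real_vector \<Rightarrow> real) \<Rightarrow> ('a \<times> real) set \<Rightarrow> bool" where
  "dominated_linear_graph p G \<longleftrightarrow>
     (\<forall>x a b. (x, a) \<in> G \<longrightarrow> (x, b) \<in> G \<longrightarrow> a = b) \<and>
     (\<forall>x a y b. (x, a) \<in> G \<longrightarrow> (y, b) \<in> G \<longrightarrow> (x + y, a + b) \<in> G) \<and>
     (\<forall>x a c. (x, a) \<in> G \<longrightarrow> (c *\<^sub>R x, c * a) \<in> G) \<and>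
     (\<forall>x a. (x, a) \<in> G \<longrightarrow> a \<le> p x) \<and> (0, 0) \<in> G"

context
  fixes p :: "'a::real_vector \<Rightarrow> real" and G :: "('a \<times> real) set"
  assumes G: "dominated_linear_graph p G"
begin

lemma dominated_linear_graph_unique: "(x, a) \<in> G \<Longrightarrow> (x, b) \<in> G \<Longrightarrow> a = b"
  using G unfolding dominated_linear_graph_def by blast

lemma dominated_linear_graph_add: "(x, a) \<in> G \<Longrightarrow> (y, b) \<in> G \<Longrightarrow> (x + y, a + b) \<in> G"
  using G unfolding dominated_linear_graph_def by blast

lemma dominated_linear_graph_scaleR: "(x, a) \<in> G \<Longrightarrow> (c *\<^sub>R x, c * a) \<in> G"
  using G unfolding dominated_linear_graph_def by blast

lemma dominated_linear_graph_le: "(x, a) \<in> G \<Longrightarrow> a \<le> p x"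
  using G unfolding dominated_linear_graph_def by blast

lemma dominated_linear_graph_zero: "(0, 0) \<in> G"
  using G unfolding dominated_linear_graph_def by blast

end

lemma dominated_linear_graph_Union:
  assumes "C \<noteq> {}" "\<forall>G\<in>C. dominated_linear_graph p G" "chain\<^sub>\<subseteq> C"
  shows "dominated_linear_graph p (\<Union>C)"
proof -
  have common: "\<exists>G\<in>C. (x, a) \<in> G \<and> (y, b) \<in> G" if xy: "(x, a) \<in> \<Union>C" "(y, b) \<in> \<Union>C" for x a y b
  proof -
    obtain A B where "A \<in> C" "(x, a) \<in> A" "B \<in> C" "(y, b) \<in> B" using xy by blast
    moreover have "A \<subseteq> B \<or> B \<subseteq> A" using calculation assms(3) unfolding chain_subset_def by blast
    ultimately show ?thesis by blast
  qed
  show ?thesis unfolding dominated_linear_graph_def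
  proof (intro conjI allI impI)
    fix x a b assume "(x, a) \<in> \<Union>C" "(x, b) \<in> \<Union>C"
    then show "a = b" using common assms(2) dominated_linear_graph_unique by metis
  next
    fix x a y b assume "(x, a) \<in> \<Union>C" "(y, b) \<in> \<Union>C"
    then show "(x + y, a + b) \<in> \<Union>C" using common assms(2) dominated_linear_graph_add by (metis UnionI)
  next
    fix x a c assume "(x, a) \<in> \<Union>C"
    then show "(c *\<^sub>R x, c * a) \<in> \<Union>C" using assms(2) dominated_linear_graph_scaleR by blast
  next
    fix x a assume "(x, a) \<in> \<Union>C"
    then show "a \<le> p x" using assms(2) dominated_linear_graph_le by blast
  next
    show "(0, 0) \<in> \<Union>C" using assms(1,2) dominated_linear_graph_zero by blast
  qed
qed

text \<open>The supremum of \<open>b - p (y - x0)\<close> over the graph works, because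
  \<open>b - p (y - x0) \<le> p (y' + x0) - b'\<close> for all graph points \<open>(y, b)\<close>, \<open>(y', b')\<close>.\<close>

lemma dominated_linear_graph_extension_value:
  assumes p: "sublinear p" and M: "dominated_linear_graph p M"
  shows "\<exists>c. \<forall>y b t. (y, b) \<in> M \<longrightarrow> b + t * c \<le> p (y + t *\<^sub>R x0)"
proof -
  define S where "S = {b - p (y - x0) | y b. (y, b) \<in> M}"
  have S_nonempty: "S \<noteq> {}"
    using dominated_linear_graph_zero[OF M] unfolding S_def by blast
  have S_bdd: "bdd_above S" unfolding S_def bdd_above_def
  proof (intro exI[of _ "p x0"] ballI)
    fix s assume "s \<in> {b - p (y - x0) | y b. (y, b) \<in> M}"
    then obtain y b where s: "s = b - p (y - x0)" "(y, b) \<in> M" by blast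
    have "b \<le> p y" using dominated_linear_graph_le[OF M s(2)] .
    also have "p y \<le> p (y - x0) + p x0" using sublinear_add[OF p, of "y - x0" x0] by simp
    finally show "s \<le> p x0" using s(1) by simp
  qed
  have le_Sup: "b + t * Sup S \<le> p (y + t *\<^sub>R x0)" if yb: "(y, b) \<in> M" for y b t
  proof (cases t "0::real" rule: linorder_cases)
    case greater
    have "Sup S \<le> (p (y + t *\<^sub>R x0) - b) / t"
    proof (rule cSup_least[OF S_nonempty])
      fix s assume "s \<in> S"
      then obtain y' b' where s: "s = b' - p (y' - x0)" "(y', b') \<in> M" unfolding S_def by blast
      have "((1/t) *\<^sub>R y, (1/t) * b) \<in> M" using dominated_linear_graph_scaleR[OF M yb] .
      then have "b' + (1/t) * b \<le> p (y' + (1/t) *\<^sub>R y)"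
        using dominated_linear_graph_le[OF M] dominated_linear_graph_add[OF M s(2)] by blast
      also have "\<dots> \<le> p (y' - x0) + p ((1/t) *\<^sub>R (y + t *\<^sub>R x0))"
        using sublinear_add[OF p, of "y' - x0" "(1/t) *\<^sub>R (y + t *\<^sub>R x0)"] greater
        by (simp add: algebra_simps)
      also have "p ((1/t) *\<^sub>R (y + t *\<^sub>R x0)) = (1/t) * p (y + t *\<^sub>R x0)"
        using sublinear_scaleR[OF p] greater by simp
      finally show "s \<le> (p (y + t *\<^sub>R x0) - b) / t"
        using s(1) by (simp add: diff_divide_distrib)
    qed
    then show ?thesis using greater by (simp add: field_simps)
  next
    case equal
    then show ?thesis using dominated_linear_graph_le[OF M yb] by simp
  next
    case less
    have "((-1/t) *\<^sub>R y, (-1/t) * b) \<in> M" using dominated_linear_graph_scaleR[OF M yb] .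
    then have "(-1/t) * b - p ((-1/t) *\<^sub>R y - x0) \<le> Sup S"
      unfolding S_def by (intro cSup_upper[OF _ S_bdd[unfolded S_def]]) blast
    moreover have "p ((-1/t) *\<^sub>R y - x0) = (-1/t) * p (y + t *\<^sub>R x0)"
    proof -
      have "(-1/t) *\<^sub>R y - x0 = (-1/t) *\<^sub>R (y + t *\<^sub>R x0)" using less by (simp add: algebra_simps)
      then show ?thesis using sublinear_scaleR[OF p, of "-1/t"] less by simp
    qed
    ultimately show ?thesis using less by (simp add: field_simps)
  qed
  then show ?thesis by blast
qed

lemma dominated_linear_graph_adjoin:
  assumes M: "dominated_linear_graph p M" and x0: "\<forall>a. (x0, a) \<notin> M"
    and c: "\<And>y b t. (y, b) \<in> M \<Longrightarrow> b + t * c \<le> p (y + t *\<^sub>R x0)"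
  shows "dominated_linear_graph p {(y + t *\<^sub>R x0, b + t * c) | y b t. (y, b) \<in> M}"
proof -
  define M' where "M' = {(y + t *\<^sub>R x0, b + t * c) | y b t. (y, b) \<in> M}"
  have coord_unique: "t = t'"
    if "y + t *\<^sub>R x0 = y' + t' *\<^sub>R x0" "(y, b) \<in> M" "(y', b') \<in> M" for y y' b b' t t'
  proof (rule ccontr)
    assume "t \<noteq> t'"
    have "(y' + (-1) *\<^sub>R y, b' + (-1) * b) \<in> M"
      using that(2,3) dominated_linear_graph_add[OF M] dominated_linear_graph_scaleR[OF M] by blast
    then have "((1/(t - t')) *\<^sub>R (y' + (-1) *\<^sub>R y), (1/(t - t')) * (b' + (-1) * b)) \<in> M"
      by (rule dominated_linear_graph_scaleR[OF M])
    moreover have "y' + (-1) *\<^sub>R y = (t - t') *\<^sub>R x0"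
      using that(1) by (simp add: algebra_simps)
    ultimately show False using x0 \<open>t \<noteq> t'\<close> by auto
  qed
  show ?thesis unfolding M'_def[symmetric] dominated_linear_graph_def
  proof (intro conjI allI impI)
    fix x a b assume "(x, a) \<in> M'" "(x, b) \<in> M'"
    then obtain y1 b1 t1 y2 b2 t2 where e: "x = y1 + t1 *\<^sub>R x0" "a = b1 + t1 * c" "(y1, b1) \<in> M"
      "x = y2 + t2 *\<^sub>R x0" "b = b2 + t2 * c" "(y2, b2) \<in> M" unfolding M'_def by blast
    then have "t1 = t2" using coord_unique by metis
    then show "a = b" using e dominated_linear_graph_unique[OF M] by auto
  next
    fix x a y b assume "(x, a) \<in> M'" "(y, b) \<in> M'"
    then obtain y1 b1 t1 y2 b2 t2 where e: "x = y1 + t1 *\<^sub>R x0" "a = b1 + t1 * c" "(y1, b1) \<in> M"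
      "y = y2 + t2 *\<^sub>R x0" "b = b2 + t2 * c" "(y2, b2) \<in> M" unfolding M'_def by blast
    have "(y1 + y2, b1 + b2) \<in> M" using dominated_linear_graph_add[OF M] e by blast
    moreover have "x + y = (y1 + y2) + (t1 + t2) *\<^sub>R x0" "a + b = (b1 + b2) + (t1 + t2) * c"
      using e by (simp_all add: algebra_simps)
    ultimately show "(x + y, a + b) \<in> M'" unfolding M'_def by blast
  next
    fix x a d assume "(x, a) \<in> M'"
    then obtain y1 b1 t1 where e: "x = y1 + t1 *\<^sub>R x0" "a = b1 + t1 * c" "(y1, b1) \<in> M"
      unfolding M'_def by blast
    have "(d *\<^sub>R y1, d * b1) \<in> M" using dominated_linear_graph_scaleR[OF M] e by blast
    moreover have "d *\<^sub>R x = d *\<^sub>R y1 + (d * t1) *\<^sub>R x0" "d * a = d * b1 + (d * t1) * c"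
      using e by (simp_all add: algebra_simps)
    ultimately show "(d *\<^sub>R x, d * a) \<in> M'" unfolding M'_def by blast
  next
    fix x a assume "(x, a) \<in> M'"
    then show "a \<le> p x" unfolding M'_def using c by blast
  next
    have "(0 + 0 *\<^sub>R x0, 0 + 0 * c) \<in> M'"
      unfolding M'_def using dominated_linear_graph_zero[OF M] by blast
    then show "(0, 0) \<in> M'" by simp
  qed
qed

lemma dominated_linear_graph_extend:
  assumes p: "sublinear p" and M: "dominated_linear_graph p M" and x0: "\<forall>a. (x0, a) \<notin> M"
  shows "\<exists>M'. dominated_linear_graph p M' \<and> M \<subset> M'"
proof -
  obtain c where c: "\<And>y b t. (y, b) \<in> M \<Longrightarrow> b + t * c \<le> p (y + t *\<^sub>R x0)"
    using dominated_linear_graph_extension_value[OF p M] by blast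
  define M' where "M' = {(y + t *\<^sub>R x0, b + t * c) | y b t. (y, b) \<in> M}"
  have "dominated_linear_graph p M'"
    unfolding M'_def using dominated_linear_graph_adjoin[OF M x0 c] .
  moreover have "M \<subseteq> M'"
  proof
    fix z assume "z \<in> M"
    then have "(fst z + 0 *\<^sub>R x0, snd z + 0 * c) \<in> M'" unfolding M'_def
      by (intro CollectI exI[of _ "fst z"] exI[of _ "snd z"] exI[of _ 0]) simp
    then show "z \<in> M'" by simp
  qed
  moreover have "(x0, c) \<in> M'"
  proof -
    have "(0 + 1 *\<^sub>R x0, 0 + 1 * c) \<in> M'" unfolding M'_def using dominated_linear_graph_zero[OF M] by blast
    then show ?thesis by simp
  qed
  ultimately show ?thesis using x0 by blast
qed

lemma dominated_linear_graph_line: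
  assumes p: "sublinear p"
  shows "dominated_linear_graph p {(t *\<^sub>R x0, t * p x0) | t. True}"
  (is "dominated_linear_graph p ?G0")
proof (cases "x0 = 0")
  case True
  then have "?G0 = {(0, 0)}" using sublinear_zero[OF p] by auto
  then show ?thesis unfolding dominated_linear_graph_def using sublinear_zero[OF p] by auto
next
  case False
  have "t * p x0 \<le> p (t *\<^sub>R x0)" for t
  proof (cases t "0::real" rule: linorder_cases)
    case less
    then have "p (t *\<^sub>R x0) = (- t) * p (- x0)"
      using sublinear_scaleR[OF p, of "- t" "- x0"] by simp
    moreover have "(- t) * (- p x0) \<le> (- t) * p (- x0)"
      using sublinear_minus[OF p, of x0] less by (intro mult_left_mono) auto
    ultimately show ?thesis by simp
  qed (use sublinear_scaleR[OF p] sublinear_zero[OF p] in auto)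
  note dom = this
  show ?thesis unfolding dominated_linear_graph_def
  proof (intro conjI allI impI)
    fix x a b assume "(x, a) \<in> ?G0" "(x, b) \<in> ?G0"
    then show "a = b" using False by (auto dest: scaleR_cancel_right[THEN iffD1])
  next
    fix x a y b assume "(x, a) \<in> ?G0" "(y, b) \<in> ?G0"
    then obtain t t' where "x = t *\<^sub>R x0" "a = t * p x0" "y = t' *\<^sub>R x0" "b = t' * p x0"
      by blast
    then have "(x + y, a + b) = ((t + t') *\<^sub>R x0, (t + t') * p x0)" by (simp add: algebra_simps)
    then show "(x + y, a + b) \<in> ?G0" by blast
  next
    fix x a c assume "(x, a) \<in> ?G0"
    then obtain t where "x = t *\<^sub>R x0" "a = t * p x0" by blast
    then have "(c *\<^sub>R x, c * a) = ((c * t) *\<^sub>R x0, (c * t) * p x0)" by simp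
    then show "(c *\<^sub>R x, c * a) \<in> ?G0" by blast
  next
    fix x a assume "(x, a) \<in> ?G0"
    then show "a \<le> p x" using dom by blast
  next
    have "(0, 0) = (0 *\<^sub>R x0, 0 * p x0)" by simp
    then show "(0, 0) \<in> ?G0" by blast
  qed
qed

lemma maximal_dominated_linear_graph:
  assumes "dominated_linear_graph p G0"
  shows "\<exists>M. dominated_linear_graph p M \<and> G0 \<subseteq> M \<and>
           (\<forall>X. dominated_linear_graph p X \<longrightarrow> M \<subseteq> X \<longrightarrow> X = M)"
proof -
  define A where "A = {G. dominated_linear_graph p G \<and> G0 \<subseteq> G}"
  have "\<exists>M\<in>A. \<forall>X\<in>A. M \<subseteq> X \<longrightarrow> X = M"
  proof (rule Zorn_Lemma2, intro ballI)
    fix C assume C: "C \<in> chains A"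
    show "\<exists>U\<in>A. \<forall>X\<in>C. X \<subseteq> U"
    proof (cases "C = {}")
      case True
      then show ?thesis using assms unfolding A_def by blast
    next
      case False
      have "chain\<^sub>\<subseteq> C" "C \<subseteq> A" using C unfolding chains_def by auto
      then have "dominated_linear_graph p (\<Union>C)" "G0 \<subseteq> \<Union>C"
        using dominated_linear_graph_Union[OF False] False unfolding A_def by auto
      then show ?thesis unfolding A_def by blast
    qed
  qed
  then obtain M where "M \<in> A" and maximal_A: "\<And>X. X \<in> A \<Longrightarrow> M \<subseteq> X \<Longrightarrow> X = M"
    by blast
  then have "dominated_linear_graph p M" and M: "G0 \<subseteq> M" unfolding A_def by auto
  moreover have "X = M" if "dominated_linear_graph p X" "M \<subseteq> X" for X
    using maximal_A[of X] that M unfolding A_def by auto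
  ultimately show ?thesis by blast
qed

lemma hahn_banach_sublinear:
  assumes p: "sublinear p"
  shows "\<exists>l. linear l \<and> (\<forall>v. l v \<le> p v) \<and> l x0 = p x0"
proof -
  obtain M where M: "dominated_linear_graph p M" "{(t *\<^sub>R x0, t * p x0) | t. True} \<subseteq> M"
    and maximal: "\<And>X. dominated_linear_graph p X \<Longrightarrow> M \<subseteq> X \<Longrightarrow> X = M"
    using maximal_dominated_linear_graph[OF dominated_linear_graph_line[OF p]] by blast
  have "(1 *\<^sub>R x0, 1 * p x0) \<in> M" using M(2) by blast
  then have x0: "(x0, p x0) \<in> M" by simp
  have total: "\<exists>a. (x, a) \<in> M" for x
    using dominated_linear_graph_extend[OF p M(1), of x] maximal by blast
  define l where "l x = (THE a. (x, a) \<in> M)" for x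
  have l_eq: "l x = a" if "(x, a) \<in> M" for x a
    unfolding l_def using that dominated_linear_graph_unique[OF M(1)] by (intro the_equality)
  have graph: "(x, l x) \<in> M" for x
    using total l_eq by metis
  have "linear l"
  proof
    show "l (x + y) = l x + l y" for x y
      using l_eq dominated_linear_graph_add[OF M(1) graph graph] by metis
    show "l (c *\<^sub>R x) = c *\<^sub>R l x" for c x
      using l_eq dominated_linear_graph_scaleR[OF M(1) graph] by simp
  qed
  moreover have "l v \<le> p v" for v
    using dominated_linear_graph_le[OF M(1) graph] .
  ultimately show ?thesis using l_eq x0 by auto
qed

section \<open>Minkowski functional and separation\<close>

definition minkowski_functional :: "'a::real_vector set \<Rightarrow> 'a \<Rightarrow> real" where
  "minkowski_functional V v = Inf {t. 0 < t \<and> (1/t) *\<^sub>R v \<in> V}"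

context
  fixes V :: "'a::real_normed_vector set" and \<rho> :: real
  assumes V_convex: "convex V" and \<rho>: "0 < \<rho>" and V_ball: "ball 0 \<rho> \<subseteq> V"
begin

lemma minkowski_functional_mem: "norm v / \<rho> < t \<Longrightarrow> t \<in> {t. 0 < t \<and> (1/t) *\<^sub>R v \<in> V}"
proof -
  assume t: "norm v / \<rho> < t"
  have "0 \<le> norm v / \<rho>" using \<rho> by simp
  with t have "0 < t" by linarith
  moreover have "norm v < t * \<rho>" using t \<rho> by (simp add: divide_less_eq mult.commute)
  then have "(1/t) *\<^sub>R v \<in> ball 0 \<rho>" using \<open>0 < t\<close> by (simp add: field_simps)
  ultimately show ?thesis using V_ball by auto
qed

lemma minkowski_functional_set_nonempty: "{t. 0 < t \<and> (1/t) *\<^sub>R v \<in> V} \<noteq> {}"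
  using minkowski_functional_mem[of v "norm v / \<rho> + 1"] by auto

lemma minkowski_functional_set_bdd: "bdd_below {t. 0 < t \<and> (1/t) *\<^sub>R v \<in> V}"
  by (rule bdd_belowI[of _ 0]) auto

lemma minkowski_functional_le: "0 < t \<Longrightarrow> (1/t) *\<^sub>R v \<in> V \<Longrightarrow> minkowski_functional V v \<le> t"
  unfolding minkowski_functional_def by (rule cInf_lower[OF _ minkowski_functional_set_bdd]) simp

lemma minkowski_functional_le_norm: "minkowski_functional V v \<le> norm v / \<rho>"
proof (rule field_le_epsilon)
  fix e :: real assume "0 < e"
  then show "minkowski_functional V v \<le> norm v / \<rho> + e"
    using minkowski_functional_mem[of v "norm v / \<rho> + e"] minkowski_functional_le by auto
qed

lemma minkowski_functional_le_1: "v \<in> V \<Longrightarrow> minkowski_functional V v \<le> 1"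
  using minkowski_functional_le[of 1 v] by simp

lemma minkowski_functional_less_1_imp_mem:
  assumes "minkowski_functional V v < 1"
  shows "v \<in> V"
proof -
  obtain t where t: "0 < t" "(1/t) *\<^sub>R v \<in> V" "t < 1"
    using cInf_lessD[OF minkowski_functional_set_nonempty assms[unfolded minkowski_functional_def]]
    by blast
  have "0 \<in> V" using V_ball \<rho> by auto
  then have "t *\<^sub>R ((1/t) *\<^sub>R v) + (1 - t) *\<^sub>R 0 \<in> V"
    using t by (intro convexD[OF V_convex]) auto
  then show ?thesis using t by simp
qed

lemma minkowski_functional_scaleR_le:
  assumes c: "0 < c"
  shows "minkowski_functional V (c *\<^sub>R v) \<le> c * minkowski_functional V v"
proof -
  have "minkowski_functional V (c *\<^sub>R v) / c \<le> minkowski_functional V v"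
    unfolding minkowski_functional_def[of V v]
  proof (rule cInf_greatest[OF minkowski_functional_set_nonempty], safe)
    fix t assume t: "0 < t" "(1/t) *\<^sub>R v \<in> V"
    then have "minkowski_functional V (c *\<^sub>R v) \<le> c * t"
      using c by (intro minkowski_functional_le) auto
    then show "minkowski_functional V (c *\<^sub>R v) / c \<le> t"
      using c by (simp add: divide_le_eq mult.commute)
  qed
  then show ?thesis using c by (simp add: divide_le_eq mult.commute)
qed

lemma minkowski_functional_add_le:
  "minkowski_functional V (u + v) \<le> minkowski_functional V u + minkowski_functional V v"
proof -
  have sum_le: "minkowski_functional V (u + v) \<le> s + t"
    if s: "0 < s" "(1/s) *\<^sub>R u \<in> V" and t: "0 < t" "(1/t) *\<^sub>R v \<in> V" for s t
  proof (rule minkowski_functional_le)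
    have "(s / (s + t)) *\<^sub>R ((1/s) *\<^sub>R u) + (t / (s + t)) *\<^sub>R ((1/t) *\<^sub>R v) \<in> V"
      using s t by (intro convexD[OF V_convex]) (auto simp: add_divide_distrib[symmetric])
    then show "(1/(s + t)) *\<^sub>R (u + v) \<in> V"
      using s t by (simp add: scaleR_add_right)
  qed (use s t in simp)
  have "minkowski_functional V (u + v) - minkowski_functional V v \<le> minkowski_functional V u"
    unfolding minkowski_functional_def[of V u]
  proof (rule cInf_greatest[OF minkowski_functional_set_nonempty], safe)
    fix s assume s: "0 < s" "(1/s) *\<^sub>R u \<in> V"
    have "minkowski_functional V (u + v) - s \<le> minkowski_functional V v"
      unfolding minkowski_functional_def[of V v]
      using sum_le[OF s] by (intro cInf_greatest[OF minkowski_functional_set_nonempty]) force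
    then show "minkowski_functional V (u + v) - minkowski_functional V v \<le> s" by simp
  qed
  then show ?thesis by simp
qed

lemma sublinear_minkowski_functional: "sublinear (minkowski_functional V)"
  unfolding sublinear_def
proof (intro conjI allI impI minkowski_functional_add_le)
  fix c :: real and v assume c: "0 < c"
  have "minkowski_functional V v = minkowski_functional V ((1/c) *\<^sub>R (c *\<^sub>R v))"
    using c by simp
  also have "\<dots> \<le> (1/c) * minkowski_functional V (c *\<^sub>R v)"
    using c by (intro minkowski_functional_scaleR_le) simp
  finally show "minkowski_functional V (c *\<^sub>R v) = c * minkowski_functional V v"
    using minkowski_functional_scaleR_le[OF c, of v] c by (simp add: field_simps)
qed

lemma separation_convex_ball:
  assumes "z \<notin> V"
  shows "\<exists>l. linear l \<and> (\<forall>v. l v \<le> norm v / \<rho>) \<and> (\<forall>v\<in>V. l v \<le> 1) \<and> 1 \<le> l z"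
proof -
  obtain l where l: "linear l" "\<And>v. l v \<le> minkowski_functional V v"
    "l z = minkowski_functional V z"
    using hahn_banach_sublinear[OF sublinear_minkowski_functional] by blast
  have "l v \<le> norm v / \<rho>" for v
    using l(2) minkowski_functional_le_norm order_trans by blast
  moreover have "l v \<le> 1" if "v \<in> V" for v
    using l(2) minkowski_functional_le_1[OF that] order_trans by blast
  moreover have "1 \<le> l z"
    using l(3) minkowski_functional_less_1_imp_mem assms by force
  ultimately show ?thesis using l(1) by blast
qed

end

section \<open>Affine minorants and conjugates\<close>

lemma convex_epigraph_convex_fun:
  assumes "convex_fun f"
  shows "convex {(w, s). f w \<le> ereal s}"
proof (rule convexI, clarsimp)
  fix w1 s1 w2 s2 and u v :: real
  assume e: "f w1 \<le> ereal s1" "f w2 \<le> ereal s2" and uv: "0 \<le> u" "0 \<le> v" "u + v = 1"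
  show "f (u *\<^sub>R w1 + v *\<^sub>R w2) \<le> ereal (u * s1 + v * s2)"
  proof (cases "u = 0 \<or> v = 0")
    case True
    then show ?thesis using e uv by auto
  next
    case False
    then have "f (u *\<^sub>R w1 + v *\<^sub>R w2) \<le> ereal u * f w1 + ereal v * f w2"
      using assms uv unfolding convex_fun_def by (metis add_diff_cancel_left' less_add_same_cancel1 order_le_less)
    also have "\<dots> \<le> ereal u * ereal s1 + ereal v * ereal s2"
      using e uv by (intro add_mono ereal_mult_left_mono) auto
    finally show ?thesis by simp
  qed
qed

text \<open>The open box below the graph near \<open>(x, f x - \<delta>)\<close> minus the epigraph is a convex set with
  interior point \<open>(0, -\<delta>)\<close> missing the origin; separating from it yields \<open>l\<close>.\<close>

lemma epigraph_separation:
  fixes f :: "'a::real_normed_vector \<Rightarrow> ereal"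
  assumes lsc: "lsc_fun f" and cvx: "convex_fun f" and fx: "f x = ereal a" and \<delta>: "0 < \<delta>"
  shows "\<exists>l \<rho>. linear l \<and> 0 < \<rho> \<and> (\<forall>v. l v \<le> norm v / \<rho>) \<and>
           (\<forall>w b. f w \<le> ereal b \<longrightarrow> l (x - w, a - b) \<le> 1) \<and> 1 \<le> l (0, \<delta>)"
proof -
  define a' where "a' = a - \<delta>/2"
  have "open (- {w. f w \<le> ereal a'})" using lsc unfolding lsc_fun_def by blast
  moreover have "x \<in> - {w. f w \<le> ereal a'}" using fx \<delta> unfolding a'_def by simp
  ultimately obtain r where r: "0 < r" "ball x r \<subseteq> - {w. f w \<le> ereal a'}"
    unfolding open_contains_ball by blast
  define A where "A = ball x r \<times> {..<a'}"
  define E where "E = {(w, s). f w \<le> ereal s}"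
  define V where "V = (+) (0, \<delta>) ` (\<Union>u\<in>A. \<Union>e\<in>E. {u - e})"
  define \<rho> where "\<rho> = min r (\<delta>/2)"
  have mem_V: "v \<in> V \<longleftrightarrow> (\<exists>u\<in>A. \<exists>e\<in>E. v = u - e + (0, \<delta>))" for v
    unfolding V_def image_iff by (auto simp: add.commute)
  have "convex V"
    unfolding V_def A_def E_def
    by (intro convex_translation convex_differences convex_Times convex_epigraph_convex_fun cvx
        convex_ball convex_real_interval)
  moreover have \<rho>: "0 < \<rho>" using r \<delta> unfolding \<rho>_def by simp
  moreover have "ball 0 \<rho> \<subseteq> V"
  proof
    fix v :: "'a \<times> real" assume "v \<in> ball 0 \<rho>"
    moreover obtain vw \<sigma> where v: "v = (vw, \<sigma>)" by (cases v)
    ultimately have "norm vw < r" "\<bar>\<sigma>\<bar> < \<delta>/2"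
      using norm_fst_le[of vw \<sigma>] norm_snd_le[of \<sigma> vw] unfolding \<rho>_def by auto
    then have "(x + vw, a + \<sigma> - \<delta>) \<in> A" unfolding A_def a'_def by (auto simp: dist_norm)
    moreover have "(x, a) \<in> E" using fx unfolding E_def by simp
    moreover have "v = (x + vw, a + \<sigma> - \<delta>) - (x, a) + (0, \<delta>)" using v by simp
    ultimately show "v \<in> V" unfolding mem_V by blast
  qed
  moreover have "(0, \<delta>) \<notin> V"
  proof
    assume "(0, \<delta>) \<in> V"
    then obtain u e where "u \<in> A" "e \<in> E" "u = e" unfolding mem_V by force
    then obtain w s where w: "w \<in> ball x r" and "s < a'" "f w \<le> ereal s"
      unfolding A_def E_def by auto
    then have "f w \<le> ereal a'" by (metis ereal_less_eq(3) less_imp_le order.trans)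
    then show False using w r(2) by auto
  qed
  ultimately obtain l where l: "linear l" "\<And>v. l v \<le> norm v / \<rho>" "\<And>v. v \<in> V \<Longrightarrow> l v \<le> 1"
    "1 \<le> l (0, \<delta>)"
    using separation_convex_ball[of V \<rho> "(0, \<delta>)"] by auto
  have "l (x - w, a - b) \<le> 1" if "f w \<le> ereal b" for w b
  proof (rule l(3))
    have "(x, a - \<delta>) \<in> A" using r \<delta> unfolding A_def a'_def by simp
    moreover have "(w, b) \<in> E" using that unfolding E_def by simp
    moreover have "(x - w, a - b) = (x, a - \<delta>) - (w, b) + (0, \<delta>)" by simp
    ultimately show "(x - w, a - b) \<in> V" unfolding mem_V by blast
  qed
  with l \<rho> show ?thesis by blast
qed

lemma continuous_affine_minorant:
  fixes f :: "'a::real_normed_vector \<Rightarrow> ereal"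
  assumes lsc: "lsc_fun f" and cvx: "convex_fun f" and not_MInf: "\<forall>w. f w \<noteq> -\<infinity>"
    and fx: "f x = ereal a" and \<delta>: "0 < \<delta>"
  shows "\<exists>ws. \<forall>w. ereal (a - \<delta> + blinfun_apply ws (w - x)) \<le> f w"
proof -
  obtain l \<rho> where l: "linear l" "0 < \<rho>" "\<And>v. l v \<le> norm v / \<rho>"
    "\<And>w b. f w \<le> ereal b \<Longrightarrow> l (x - w, a - b) \<le> 1" "1 \<le> l (0, \<delta>)"
    using epigraph_separation[OF lsc cvx fx \<delta>] by blast
  define \<beta> where "\<beta> = l (0, 1)"
  define \<phi> where "\<phi> w = l (w, 0)" for w
  have l_Pair: "l (w, s) = \<phi> w + s * \<beta>" for w s
    using linear_add[OF l(1), of "(w, 0)" "s *\<^sub>R (0, 1)"] linear_scale[OF l(1), of s "(0, 1)"]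
    unfolding \<phi>_def \<beta>_def by simp
  have \<phi>_0: "\<phi> 0 = 0" unfolding \<phi>_def using linear_0[OF l(1)] by (simp add: zero_prod_def)
  have "1 \<le> \<delta> * \<beta>" using l(5) l_Pair[of 0 \<delta>] \<phi>_0 by (simp add: mult.commute)
  then have \<beta>: "0 < \<beta>" using \<delta> zero_less_mult_pos[of \<delta> \<beta>] by linarith
  have \<phi>_linear: "linear \<phi>"
    unfolding \<phi>_def
    by (rule linear_compose[OF _ l(1), unfolded o_def]) (intro linearI; simp)
  have "bounded_linear (\<lambda>w. - \<phi> w / \<beta>)"
  proof (rule bounded_linear_intro[where K = "1 / (\<rho> * \<beta>)"])
    show "- \<phi> (u + v) / \<beta> = - \<phi> u / \<beta> + - \<phi> v / \<beta>" for u v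
      using linear_add[OF \<phi>_linear] by (simp add: diff_divide_distrib)
    show "- \<phi> (c *\<^sub>R u) / \<beta> = c *\<^sub>R (- \<phi> u / \<beta>)" for c u
      using linear_scale[OF \<phi>_linear] by simp
    show "norm (- \<phi> u / \<beta>) \<le> norm u * (1 / (\<rho> * \<beta>))" for u
    proof -
      have "\<bar>\<phi> u\<bar> \<le> norm u / \<rho>"
        using l(3)[of "(u, 0)"] l(3)[of "(- u, 0)"] linear_neg[OF \<phi>_linear, of u]
        unfolding \<phi>_def by (simp add: norm_Pair)
      then show ?thesis using \<beta> l(2) by (simp add: field_simps abs_div)
    qed
  qed
  then have ws: "blinfun_apply (Blinfun (\<lambda>w. - \<phi> w / \<beta>)) w = - \<phi> w / \<beta>" for w
    by (simp add: bounded_linear_Blinfun_apply)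
  have "ereal (a - \<delta> + - \<phi> (w - x) / \<beta>) \<le> f w" for w
  proof (cases "f w")
    case (real b)
    then have "\<phi> (x - w) + (a - b) * \<beta> \<le> \<delta> * \<beta>"
      using l(4)[of w b] l_Pair \<open>1 \<le> \<delta> * \<beta>\<close> by simp
    moreover have "\<phi> (x - w) = - \<phi> (w - x)"
      using linear_neg[OF \<phi>_linear, of "w - x"] by simp
    ultimately show ?thesis using real \<beta> by (simp add: field_simps)
  qed (use not_MInf in auto)
  then show ?thesis using ws by metis
qed

lemma fenchel_young: "ereal (blinfun_apply xs w) - f w \<le> conjugate f xs"
  unfolding conjugate_def by (rule SUP_upper) simp

lemma conjugate_neq_MInf:
  assumes "proper_fun f"
  shows "conjugate f xs \<noteq> -\<infinity>"
proof -
  obtain w b where "f w = ereal b"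
    using assms unfolding proper_fun_def by (metis less_ereal.simps(2) real_of_ereal.elims)
  then show ?thesis using fenchel_young[of xs w f] by auto
qed

text \<open>The approximate Fenchel--Moreau inequality \<open>f\<^sup>*\<^sup>* x \<ge> f x\<close> at points of the domain.\<close>

lemma conjugate_le_pairing_approx:
  fixes f :: "'a::real_normed_vector \<Rightarrow> ereal"
  assumes "lsc_fun f" "convex_fun f" and not_MInf: "\<forall>w. f w \<noteq> -\<infinity>"
    and "f x = ereal a" "0 < \<delta>"
  shows "\<exists>ws. conjugate f ws \<le> ereal (blinfun_apply ws x - a + \<delta>)"
proof -
  obtain ws where ws: "\<And>w. ereal (a - \<delta> + blinfun_apply ws (w - x)) \<le> f w"
    using continuous_affine_minorant[OF assms] by blast
  have "ereal (blinfun_apply ws w) - f w \<le> ereal (blinfun_apply ws x - a + \<delta>)" for w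
  proof (cases "f w")
    case (real b)
    then show ?thesis using ws[of w] by (simp add: blinfun.bilinear_simps)
  qed (use not_MInf in auto)
  then show ?thesis unfolding conjugate_def by (intro exI SUP_least)
qed

lemma eps_subdiff_conv_conjugate:
  assumes proper: "proper_fun f"
  shows "eps_subdiff f \<epsilon> x = {xs. f x + conjugate f xs \<le> ereal (blinfun_apply xs x + \<epsilon>)}"
proof (intro set_eqI iffI; clarsimp)
  have not_MInf: "f w \<noteq> -\<infinity>" for w using proper unfolding proper_fun_def by blast
  fix xs
  show "f x + conjugate f xs \<le> ereal (blinfun_apply xs x + \<epsilon>)" if "xs \<in> eps_subdiff f \<epsilon> x"
  proof -
    have "f x < \<infinity>" and sub: "\<And>y. ereal (blinfun_apply xs (y - x)) - ereal \<epsilon> \<le> f y - f x"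
      using that unfolding eps_subdiff_def by (auto split: if_splits)
    then obtain a where a: "f x = ereal a" using not_MInf by (cases "f x") auto
    have "ereal (blinfun_apply xs y) - f y \<le> ereal (blinfun_apply xs x - a + \<epsilon>)" for y
    proof (cases "f y")
      case (real b)
      then show ?thesis using sub[of y] a by (simp add: blinfun.bilinear_simps)
    qed (use not_MInf in auto)
    then have "conjugate f xs \<le> ereal (blinfun_apply xs x - a + \<epsilon>)"
      unfolding conjugate_def by (rule SUP_least)
    then show ?thesis using a by (cases "conjugate f xs") auto
  qed
  show "xs \<in> eps_subdiff f \<epsilon> x" if le: "f x + conjugate f xs \<le> ereal (blinfun_apply xs x + \<epsilon>)"
  proof -
    obtain a c where a: "f x = ereal a" and c: "conjugate f xs = ereal c"
      using le not_MInf[of x] conjugate_neq_MInf[OF proper, of xs]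
      by (cases "f x"; cases "conjugate f xs") auto
    have "ereal (blinfun_apply xs (y - x)) - ereal \<epsilon> \<le> f y - f x" for y
    proof (cases "f y")
      case (real b)
      then show ?thesis using fenchel_young[of xs y f] le a c by (simp add: blinfun.bilinear_simps)
    qed (use not_MInf a in auto)
    then show ?thesis unfolding eps_subdiff_def using a by simp
  qed
qed

lemma T_breve_fitzpatrick_FY_imp_le:
  fixes f :: "'a::real_normed_vector \<Rightarrow> ereal"
  assumes lsc: "lsc_fun f" and proper: "proper_fun f" and cvx: "convex_fun f"
    and "xs \<in> T_breve (fitzpatrick_FY f) \<epsilon> x"
  shows "f x + conjugate f xs \<le> ereal (blinfun_apply xs x + \<epsilon>)"
proof -
  have not_MInf: "\<forall>w. f w \<noteq> -\<infinity>" using proper unfolding proper_fun_def by blast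
  have conj_not_MInf: "conjugate f ws \<noteq> -\<infinity>" for ws using conjugate_neq_MInf[OF proper] .
  have lt: "f x + conjugate f xs < \<infinity>" and
    sub: "\<And>w ws. f x + conjugate f xs + ereal (blinfun_apply xs (w - x) + blinfun_apply (ws - xs) x)
            - ereal (2 * \<epsilon>) \<le> f w + conjugate f ws"
    using assms(4) unfolding T_breve_def eps_subdiff_pair_def fitzpatrick_FY_def by (auto split: if_splits)
  obtain a c where a: "f x = ereal a" and c: "conjugate f xs = ereal c"
    using lt not_MInf conj_not_MInf[of xs] by (cases "f x"; cases "conjugate f xs") auto
  have "a + c - blinfun_apply xs x \<le> \<epsilon>"
  proof (rule field_le_epsilon)
    fix \<delta> :: real assume \<delta>: "0 < \<delta>"
    obtain ws where ws: "conjugate f ws \<le> ereal (blinfun_apply ws x - a + \<delta>)"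
      using conjugate_le_pairing_approx[OF lsc cvx not_MInf a \<delta>] by blast
    then obtain d where d: "conjugate f ws = ereal d" "d \<le> blinfun_apply ws x - a + \<delta>"
      using conj_not_MInf[of ws] by (cases "conjugate f ws") auto
    have "ereal (c - \<delta>) < conjugate f xs" using c \<delta> by simp
    then obtain w where w: "ereal (c - \<delta>) < ereal (blinfun_apply xs w) - f w"
      unfolding conjugate_def by (subst (asm) less_SUP_iff) blast
    then obtain b where b: "f w = ereal b" "c - \<delta> < blinfun_apply xs w - b"
      using not_MInf by (cases "f w") auto
    have "a + c + (blinfun_apply xs w - blinfun_apply xs x + (blinfun_apply ws x - blinfun_apply xs x))
        - 2 * \<epsilon> \<le> b + d"
      using sub[of w ws] a b c d by (simp add: blinfun.bilinear_simps)
    then show "a + c - blinfun_apply xs x \<le> \<epsilon> + \<delta>" using b d by simp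
  qed
  then show ?thesis using a c by simp
qed

lemma T_breve_fitzpatrick_FY_conv_conjugate:
  fixes f :: "'a::real_normed_vector \<Rightarrow> ereal"
  assumes "lsc_fun f" and proper: "proper_fun f" and "convex_fun f"
  shows "T_breve (fitzpatrick_FY f) \<epsilon> x = {xs. f x + conjugate f xs \<le> ereal (blinfun_apply xs x + \<epsilon>)}"
proof (intro set_eqI iffI; clarsimp)
  have not_MInf: "\<forall>w. f w \<noteq> -\<infinity>" using proper unfolding proper_fun_def by blast
  have conj_not_MInf: "conjugate f ws \<noteq> -\<infinity>" for ws using conjugate_neq_MInf[OF proper] .
  fix xs
  show "f x + conjugate f xs \<le> ereal (blinfun_apply xs x + \<epsilon>)"
    if "xs \<in> T_breve (fitzpatrick_FY f) \<epsilon> x"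
    using T_breve_fitzpatrick_FY_imp_le[OF assms that] .
  show "xs \<in> T_breve (fitzpatrick_FY f) \<epsilon> x"
    if le: "f x + conjugate f xs \<le> ereal (blinfun_apply xs x + \<epsilon>)"
  proof -
    obtain a c where a: "f x = ereal a" and c: "conjugate f xs = ereal c"
      using le not_MInf conj_not_MInf[of xs] by (cases "f x"; cases "conjugate f xs") auto
    have "ereal a + ereal c + ereal (blinfun_apply xs (w - x) + blinfun_apply (ws - xs) x)
        - ereal (2 * \<epsilon>) \<le> f w + conjugate f ws" for w ws
    proof (cases "f w"; cases "conjugate f ws")
      fix b d assume b: "f w = ereal b" and d: "conjugate f ws = ereal d"
      have "blinfun_apply xs w - b \<le> c" "blinfun_apply ws x - a \<le> d"
        using fenchel_young[of xs w f] fenchel_young[of ws x f] a b c d by simp_all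
      then show ?thesis using le a b c d by (simp add: blinfun.bilinear_simps)
    qed (use not_MInf conj_not_MInf in auto)
    then show ?thesis
      unfolding T_breve_def eps_subdiff_pair_def fitzpatrick_FY_def using a c by simp
  qed
qed

theorem corollary3p1:
  fixes f :: "'a::banach \<Rightarrow> ereal"
  assumes "reflexive_space TYPE('a)"
    and "lsc_fun f" and "proper_fun f" and "convex_fun f"
    and "\<epsilon> \<ge> 0"
  shows "eps_subdiff f \<epsilon> x = T_breve (fitzpatrick_FY f) \<epsilon> x"
  using eps_subdiff_conv_conjugate[OF assms(3)] T_breve_fitzpatrick_FY_conv_conjugate[OF assms(2-4)]
  by simp

end
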